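(* Let $x\ge 0$ and $y$ be integers with $M(x,y)\neq\emptyset$, and let $G_0$ be a minimal graph in $M(x,y)$. If $G_0$ is nonseparable, then (a) $|V(G_0)|=4f(G_0)-2x-1$; (b) $4f(G_0)-2x-1<R(f(G_0)-x+1,3)$.
   Context: All graphs are finite, simple and undirected; the empty graph (with no vertices) is allowed, with $\chi=\mathrm{cl}=0$. $\mathrm{cl}(G)$ is the clique number, $\chi(G)$ the chromatic number, and $f(G)=\chi(G)-\mathrm{cl}(G)$. For integers $x,y$, $M(x,y)=\{G: |V(G)|<\chi(G)+2f(G)-x \text{ and } f(G)\le y\}$. A graph $G_0$ in a nonempty set $\mathcal M$ of graphs is minimal in $\mathcal M$ if $|V(G_0)|=\min\{|V(G)|:G\in\mathcal M\}$. For vertex-disjoint graphs $G_1,G_2$, $G_1+G_2$ is the graph on $V(G_1)\cup V(G_2)$ whose edges are those of $G_1$, those of $G_2$, and all pairs $\{u,v\}$ with $u\in V(G_1)$, $v\in V(G_2)$ (the join). $G$ is separable if $G=G_1+G_2$ with $V(G_1)\neq\emptyset$ and $V(G_2)\neq\emptyset$; otherwise nonseparable. $R(p,3)$ is the least $n$ such that every graph on at least $n$ vertices has a $p$-clique or an independent set of size $3$. *)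

theory Defs
  imports Main
begin

text \<open>Finite simple undirected graphs, with vertices drawn from nat
 (every finite graph is isomorphic to one of these).\<close>

type_synonym graph = "nat set \<times> nat set set"

definition V :: "graph \<Rightarrow> nat set" where "V G = fst G"
definition E :: "graph \<Rightarrow> nat set set" where "E G = snd G"

definition is_graph :: "graph \<Rightarrow> bool" where
  "is_graph G \<longleftrightarrow> finite (V G) \<and>
     (\<forall>e\<in>E G. \<exists>u v. e = {u, v} \<and> u \<noteq> v \<and> u \<in> V G \<and> v \<in> V G)"

definition is_clique :: "graph \<Rightarrow> nat set \<Rightarrow> bool" where
  "is_clique G K \<longleftrightarrow> K \<subseteq> V G \<and> (\<forall>u\<in>K. \<forall>v\<in>K. u \<noteq> v \<longrightarrow> {u, v} \<in> E G)"

definition is_indep :: "graph \<Rightarrow> nat set \<Rightarrow> bool" where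
  "is_indep G I \<longleftrightarrow> I \<subseteq> V G \<and> (\<forall>u\<in>I. \<forall>v\<in>I. {u, v} \<notin> E G)"

definition cl :: "graph \<Rightarrow> nat" where
  "cl G = Max {card K | K. is_clique G K}"

definition chi :: "graph \<Rightarrow> nat" where
  "chi G = (LEAST k. \<exists>c :: nat \<Rightarrow> nat. c ` V G \<subseteq> {..<k} \<and>
              (\<forall>u\<in>V G. \<forall>v\<in>V G. {u, v} \<in> E G \<longrightarrow> c u \<noteq> c v))"

definition f :: "graph \<Rightarrow> int" where
  "f G = int (chi G) - int (cl G)"

definition M :: "int \<Rightarrow> int \<Rightarrow> graph set" where
  "M x y = {G. is_graph G \<and> int (card (V G)) < int (chi G) + 2 * f G - x \<and> f G \<le> y}"

definition minimal_in :: "graph set \<Rightarrow> graph \<Rightarrow> bool" where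
  "minimal_in \<M> G0 \<longleftrightarrow> G0 \<in> \<M> \<and> card (V G0) = (LEAST n. \<exists>G\<in>\<M>. card (V G) = n)"

definition join :: "graph \<Rightarrow> graph \<Rightarrow> graph" where
  "join G1 G2 = (V G1 \<union> V G2,
                 E G1 \<union> E G2 \<union> {{u, v} | u v. u \<in> V G1 \<and> v \<in> V G2})"

definition separable :: "graph \<Rightarrow> bool" where
  "separable G \<longleftrightarrow> (\<exists>G1 G2. is_graph G1 \<and> is_graph G2 \<and> V G1 \<inter> V G2 = {} \<and>
      V G1 \<noteq> {} \<and> V G2 \<noteq> {} \<and> G = join G1 G2)"

definition ramsey3 :: "int \<Rightarrow> nat" where
  "ramsey3 p = (LEAST n. \<forall>G. is_graph G \<and> card (V G) \<ge> n \<longrightarrow>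
      (\<exists>K. is_clique G K \<and> int (card K) = p) \<or> (\<exists>I. is_indep G I \<and> card I = 3))"

end

(*
  By minimality no proper induced subgraph
  lies in M(x,y); deleting a stable set changes chi and cl by at most one,
  so this forces:
    * alpha(G) <= 2, hence every colour class has at most two vertices;
    * G is vertex-critical: chi(G - v) < chi(G) for every vertex v;
    * |V(G)| = chi + 2 f - x - 1 (remove a colour class of size two).
  In an optimal colouring the number s of singleton classes satisfies
  s + |V(G)| = 2 chi, so s does not depend on the colouring.  Criticality
  gives s >= 1, and a Gallai-type exchange argument shows that s >= 2 would
  split G as a join; hence s = 1 and |V(G)| = 2 chi - 1.  Comparing the two
  expressions for |V(G)| yields chi = 2f - x and cl = f - x, which is part (a);
  part (b) follows since G has no (cl+1)-clique and no stable set of size 3.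
*)
theory Submission
  imports Defs "HOL-Library.Ramsey"
begin

section \<open>Induced subgraphs\<close>

definition induced :: "graph \<Rightarrow> nat set \<Rightarrow> graph" where
  "induced G W = (W, {e \<in> E G. e \<subseteq> W})"

lemma V_induced [simp]: "V (induced G W) = W"
  by (simp add: induced_def V_def)

lemma E_induced [simp]: "E (induced G W) = {e \<in> E G. e \<subseteq> W}"
  by (simp add: induced_def E_def)

lemma finite_subset_V: "is_graph G \<Longrightarrow> W \<subseteq> V G \<Longrightarrow> finite W"
  unfolding is_graph_def by (auto intro: finite_subset)

lemma is_graph_induced:
  assumes g: "is_graph G" and W: "W \<subseteq> V G"
  shows "is_graph (induced G W)"
  unfolding is_graph_def
proof (intro conjI ballI)
  show "finite (V (induced G W))" using finite_subset_V[OF g W] by simp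
next
  fix e assume e: "e \<in> E (induced G W)"
  then obtain u v where "e = {u,v}" "u \<noteq> v" using g unfolding is_graph_def by auto
  then show "\<exists>u v. e = {u, v} \<and> u \<noteq> v \<and> u \<in> V (induced G W) \<and> v \<in> V (induced G W)"
    using e by auto
qed

lemma induced_all: "is_graph G \<Longrightarrow> induced G (V G) = G"
  by (cases G) (auto simp: induced_def V_def E_def is_graph_def)

lemma no_loop: "is_graph G \<Longrightarrow> {u} \<notin> E G"
  unfolding is_graph_def by (metis doubleton_eq_iff insert_absorb2)

lemma is_clique_iff: "is_clique G K \<longleftrightarrow> K \<subseteq> V G \<and> clique K (E G)"
  unfolding is_clique_def clique_def by blast

lemma is_indep_iff:
  assumes "is_graph G"
  shows "is_indep G I \<longleftrightarrow> I \<subseteq> V G \<and> indep I (E G)"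
  using no_loop[OF assms] unfolding is_indep_def indep_def by fastforce

section \<open>Colour partitions and the chromatic number\<close>

definition colour_partition :: "graph \<Rightarrow> nat set \<Rightarrow> nat set set \<Rightarrow> bool" where
  "colour_partition G W P \<longleftrightarrow> \<Union>P = W \<and> (\<forall>B\<in>P. B \<noteq> {} \<and> indep B (E G)) \<and>
     (\<forall>B\<in>P. \<forall>B'\<in>P. B \<noteq> B' \<longrightarrow> B \<inter> B' = {})"

lemma colour_partition_finite: "finite W \<Longrightarrow> colour_partition G W P \<Longrightarrow> finite P"
  unfolding colour_partition_def by (metis finite_UnionD)

lemma colour_partition_singletons: "colour_partition G W ((\<lambda>v. {v}) ` W)"
  unfolding colour_partition_def indep_def by auto

lemma colouring_of_partition:
  assumes g: "is_graph G" and fW: "finite W" and P: "colour_partition G W P"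
  shows "\<exists>c::nat\<Rightarrow>nat. c ` W \<subseteq> {..<card P} \<and> (\<forall>u\<in>W. \<forall>v\<in>W. {u,v} \<in> E G \<longrightarrow> c u \<noteq> c v)"
proof -
  obtain h where h: "bij_betw h P {0..<card P}"
    using ex_bij_betw_finite_nat[OF colour_partition_finite[OF fW P]] by blast
  have un: "\<Union>P = W" and disj: "\<And>B B'. B \<in> P \<Longrightarrow> B' \<in> P \<Longrightarrow> B \<noteq> B' \<Longrightarrow> B \<inter> B' = {}"
    and indB: "\<And>B. B \<in> P \<Longrightarrow> indep B (E G)"
    using P unfolding colour_partition_def by auto
  define class_of where "class_of v = (THE B. B \<in> P \<and> v \<in> B)" for v
  have class_of: "class_of v \<in> P \<and> v \<in> class_of v" if "v \<in> W" for v
  proof -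
    obtain B where B: "B \<in> P" "v \<in> B" using un \<open>v \<in> W\<close> by blast
    have "class_of v = B" unfolding class_of_def
      by (rule the_equality) (use B disj in blast)+
    then show ?thesis using B by simp
  qed
  show ?thesis
  proof (intro exI conjI ballI impI)
    have "h B < card P" if "B \<in> P" for B using bij_betwE[OF h] that by auto
    then show "(h \<circ> class_of) ` W \<subseteq> {..<card P}" using class_of by auto
  next
    fix u v assume uv: "u \<in> W" "v \<in> W" "{u,v} \<in> E G"
    have "u \<noteq> v" using uv no_loop[OF g] by auto
    show "(h \<circ> class_of) u \<noteq> (h \<circ> class_of) v"
    proof
      assume "(h \<circ> class_of) u = (h \<circ> class_of) v"
      then have "class_of u = class_of v"
        using inj_onD[OF bij_betw_imp_inj_on[OF h]] class_of uv by auto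
      then have "u \<in> class_of u" "v \<in> class_of u" "class_of u \<in> P" using class_of uv by auto
      then show False using indB uv \<open>u \<noteq> v\<close> unfolding indep_def by blast
    qed
  qed
qed

lemma chi_induced_le_partition:
  assumes g: "is_graph G" and W: "W \<subseteq> V G" and P: "colour_partition G W P"
  shows "chi (induced G W) \<le> card P"
proof -
  obtain c :: "nat\<Rightarrow>nat" where "c ` W \<subseteq> {..<card P}"
    "\<forall>u\<in>W. \<forall>v\<in>W. {u,v} \<in> E G \<longrightarrow> c u \<noteq> c v"
    using colouring_of_partition[OF g finite_subset_V[OF g W] P] by blast
  then have "\<exists>c :: nat \<Rightarrow> nat. c ` V (induced G W) \<subseteq> {..<card P} \<and>
      (\<forall>u\<in>V (induced G W). \<forall>v\<in>V (induced G W). {u, v} \<in> E (induced G W) \<longrightarrow> c u \<noteq> c v)"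
    by auto
  then show ?thesis unfolding chi_def by (rule Least_le)
qed

lemma chi_induced_le_card: "is_graph G \<Longrightarrow> W \<subseteq> V G \<Longrightarrow> chi (induced G W) \<le> card W"
  using chi_induced_le_partition[OF _ _ colour_partition_singletons] card_image[of "\<lambda>v. {v}" W]
  by (metis inj_singleton inj_on_subset subset_UNIV)

lemma chi_optimal_partition:
  assumes g: "is_graph G" and W: "W \<subseteq> V G"
  shows "\<exists>P. colour_partition G W P \<and> card P = chi (induced G W)"
proof -
  define k where "k = chi (induced G W)"
  let ?proper = "\<lambda>k. \<exists>c :: nat \<Rightarrow> nat. c ` V (induced G W) \<subseteq> {..<k} \<and>
      (\<forall>u\<in>V (induced G W). \<forall>v\<in>V (induced G W). {u, v} \<in> E (induced G W) \<longrightarrow> c u \<noteq> c v)"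
  obtain c0 :: "nat \<Rightarrow> nat" where "c0 ` W \<subseteq> {..<card ((\<lambda>v. {v}) ` W)}"
    "\<forall>u\<in>W. \<forall>v\<in>W. {u,v} \<in> E G \<longrightarrow> c0 u \<noteq> c0 v"
    using colouring_of_partition[OF g finite_subset_V[OF g W] colour_partition_singletons] by blast
  then have "?proper (card ((\<lambda>v. {v}) ` W))" by auto
  then have "?proper k" unfolding k_def chi_def by (rule LeastI)
  then obtain c :: "nat\<Rightarrow>nat" where c: "c ` W \<subseteq> {..<k}"
     "\<forall>u\<in>W. \<forall>v\<in>W. {u, v} \<in> E G \<longrightarrow> c u \<noteq> c v"
    by auto
  define P where "P = (\<lambda>i. {v\<in>W. c v = i}) ` {..<k} - {{}}"
  have P: "colour_partition G W P"
    unfolding colour_partition_def indep_def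
  proof (intro conjI ballI impI)
    show "\<Union>P = W"
    proof
      show "\<Union>P \<subseteq> W" unfolding P_def by blast
      show "W \<subseteq> \<Union>P"
      proof
        fix v assume v: "v \<in> W"
        then have "{w\<in>W. c w = c v} \<in> P" using c(1) unfolding P_def by blast
        then show "v \<in> \<Union>P" using v by blast
      qed
    qed
  next
    fix B assume "B \<in> P"
    then show "B \<noteq> {}" unfolding P_def by blast
  next
    fix B u v assume "B \<in> P" "u \<in> B" "v \<in> B" "u \<noteq> v"
    then obtain i where "B = {v\<in>W. c v = i}" unfolding P_def by blast
    then have "u \<in> W" "v \<in> W" "c u = c v" using \<open>u \<in> B\<close> \<open>v \<in> B\<close> by auto
    then show "{u, v} \<notin> E G" using c(2) by blast
  next
    fix B B' assume B: "B \<in> P" "B' \<in> P" "B \<noteq> B'"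
    then obtain i j where "B = {v\<in>W. c v = i}" "B' = {v\<in>W. c v = j}" unfolding P_def by blast
    then show "B \<inter> B' = {}" using B(3) by (cases "i = j") auto
  qed
  have "card P \<le> card ((\<lambda>i. {v\<in>W. c v = i}) ` {..<k})" unfolding P_def by (rule card_Diff1_le)
  also have "\<dots> \<le> k" using card_image_le[of "{..<k}"] by simp
  finally have "card P \<le> k" .
  moreover have "k \<le> card P" using chi_induced_le_partition[OF g W P] k_def by simp
  ultimately show ?thesis using P k_def by (intro exI[of _ P]) auto
qed

lemma colour_partition_restrict:
  assumes P: "colour_partition G W' P" and W: "W \<subseteq> W'"
  shows "colour_partition G W ((\<lambda>B. B \<inter> W) ` P - {{}})"
  unfolding colour_partition_def
proof (intro conjI ballI impI)
  have "\<Union>((\<lambda>B. B \<inter> W) ` P - {{}}) = \<Union>P \<inter> W" by blast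
  then show "\<Union>((\<lambda>B. B \<inter> W) ` P - {{}}) = W" using P W unfolding colour_partition_def by auto
next
  fix B assume "B \<in> (\<lambda>B. B \<inter> W) ` P - {{}}"
  then obtain C where "C \<in> P" "B = C \<inter> W" "B \<noteq> {}" by blast
  then show "B \<noteq> {}" "indep B (E G)" using P unfolding colour_partition_def indep_def by auto
next
  fix B B' assume "B \<in> (\<lambda>B. B \<inter> W) ` P - {{}}" "B' \<in> (\<lambda>B. B \<inter> W) ` P - {{}}" "B \<noteq> B'"
  then obtain C C' where "C \<in> P" "B = C \<inter> W" "C' \<in> P" "B' = C' \<inter> W" "C \<noteq> C'" by blast
  then show "B \<inter> B' = {}" using P unfolding colour_partition_def by blast
qed

lemma chi_induced_mono:
  assumes g: "is_graph G" and W: "W \<subseteq> W'" and W': "W' \<subseteq> V G"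
  shows "chi (induced G W) \<le> chi (induced G W')"
proof -
  obtain P where P: "colour_partition G W' P" "card P = chi (induced G W')"
    using chi_optimal_partition[OF g W'] by blast
  have "finite P" using colour_partition_finite[OF finite_subset_V[OF g W'] P(1)] .
  then have "card ((\<lambda>B. B \<inter> W) ` P - {{}}) \<le> card P"
    by (meson card_Diff1_le card_image_le finite_imageI order_trans)
  moreover have "W \<subseteq> V G" using W W' by (rule order_trans)
  then have "chi (induced G W) \<le> card ((\<lambda>B. B \<inter> W) ` P - {{}})"
    using chi_induced_le_partition[OF g _ colour_partition_restrict[OF P(1) W]] by blast
  ultimately show ?thesis using P(2) by linarith
qed

lemma colour_partition_insert:
  assumes P: "colour_partition G (W - S) P" and S: "S \<subseteq> W" "S \<noteq> {}" "indep S (E G)"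
  shows "colour_partition G W (insert S P)"
  unfolding colour_partition_def
proof (intro conjI ballI impI)
  have un: "\<Union>P = W - S" using P unfolding colour_partition_def by blast
  then show "\<Union>(insert S P) = W" using S(1) by auto
  fix B B' assume "B \<in> insert S P" "B' \<in> insert S P" "B \<noteq> B'"
  moreover have "C \<inter> S = {}" if "C \<in> P" for C using un that by blast
  ultimately show "B \<inter> B' = {}" using P unfolding colour_partition_def by blast
next
  fix B assume "B \<in> insert S P"
  then show "B \<noteq> {}" "indep B (E G)" using P S unfolding colour_partition_def by auto
qed

lemma colour_partition_remove:
  assumes P: "colour_partition G W P" and B: "B \<in> P"
  shows "colour_partition G (W - B) (P - {B})"
  unfolding colour_partition_def
proof (intro conjI ballI impI)
  have "C \<inter> B = {}" if "C \<in> P - {B}" for C using P B that unfolding colour_partition_def by blast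
  then show "\<Union>(P - {B}) = W - B" using P B unfolding colour_partition_def by blast
qed (use P in \<open>auto simp: colour_partition_def\<close>)

lemma colour_partition_replace:
  assumes P: "colour_partition G W P" and X: "X \<subseteq> P" and U: "\<Union>Y = \<Union>X"
    and Y_classes: "\<And>D. D \<in> Y \<Longrightarrow> D \<noteq> {} \<and> indep D (E G)"
    and Y_disj: "\<And>D D'. D \<in> Y \<Longrightarrow> D' \<in> Y \<Longrightarrow> D \<noteq> D' \<Longrightarrow> D \<inter> D' = {}"
  shows "colour_partition G W ((P - X) \<union> Y)" "(P - X) \<inter> Y = {}"
proof -
  have un: "\<Union>P = W" and disj: "\<And>B B'. B \<in> P \<Longrightarrow> B' \<in> P \<Longrightarrow> B \<noteq> B' \<Longrightarrow> B \<inter> B' = {}"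
    and classes: "\<And>B. B \<in> P \<Longrightarrow> B \<noteq> {} \<and> indep B (E G)"
    using P unfolding colour_partition_def by auto
  have apart: "B \<inter> D = {}" if "B \<in> P - X" "D \<in> Y" for B D
  proof -
    have "B \<inter> C = {}" if "C \<in> X" for C using disj[of B C] that \<open>B \<in> P - X\<close> X by blast
    then show ?thesis using U \<open>D \<in> Y\<close> by blast
  qed
  show "colour_partition G W ((P - X) \<union> Y)"
    unfolding colour_partition_def
  proof (intro conjI ballI impI)
    have "\<Union>(P - X \<union> Y) = \<Union>(P - X) \<union> \<Union>X" using U by (simp only: Union_Un_distrib)
    also have "\<dots> = \<Union>P" using X by blast
    finally show "\<Union>(P - X \<union> Y) = W" using un by simp
  next
    fix B assume "B \<in> P - X \<union> Y"
    then show "B \<noteq> {}" "indep B (E G)" using classes Y_classes by blast+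
  next
    fix B B' assume B: "B \<in> P - X \<union> Y" "B' \<in> P - X \<union> Y" "B \<noteq> B'"
    consider "B \<in> Y" "B' \<in> Y" | "B \<in> Y" "B' \<in> P - X" | "B \<in> P - X" "B' \<in> Y"
      | "B \<in> P - X" "B' \<in> P - X"
      using B by blast
    then show "B \<inter> B' = {}"
    proof cases
      case 1 then show ?thesis using Y_disj B(3) by blast
    next
      case 2 then show ?thesis using apart[of B' B] by blast
    next
      case 3 then show ?thesis using apart[of B B'] by blast
    next
      case 4 then show ?thesis using disj B(3) by blast
    qed
  qed
  show "(P - X) \<inter> Y = {}"
  proof (rule ccontr)
    assume "(P - X) \<inter> Y \<noteq> {}"
    then obtain D where "D \<in> P - X" "D \<in> Y" by blast
    then show False using apart[of D D] Y_classes by blast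
  qed
qed

lemma colour_partition_merge:
  assumes P: "colour_partition G W P" "finite P"
    and ab: "{a} \<in> P" "{b} \<in> P" "a \<noteq> b" "{a,b} \<notin> E G"
  shows "colour_partition G W (P - {{a},{b}} \<union> {{a,b}})"
    and "card (P - {{a},{b}} \<union> {{a,b}}) = card P - 1"
proof -
  have X: "{{a},{b}} \<subseteq> P" using ab by blast
  have U: "\<Union>{{a,b}} = \<Union>{{a},{b}}" by auto
  have Y: "D \<noteq> {} \<and> indep D (E G)" if "D \<in> {{a,b}}" for D
    using that ab(4) unfolding indep_def by (auto simp: insert_commute)
  have Y_disj: "D \<inter> D' = {}" if "D \<in> {{a,b}}" "D' \<in> {{a,b}}" "D \<noteq> D'" for D D'
    using that by blast
  note r = colour_partition_replace[OF P(1) X U Y Y_disj]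
  show "colour_partition G W (P - {{a},{b}} \<union> {{a,b}})" by (rule r(1))
  have two: "card {{a},{b}} = 2" using ab(3) by simp
  have "card (P - {{a},{b}}) = card P - 2" using card_Diff_subset[OF _ X] two by simp
  moreover have "card P \<ge> 2" using card_mono[OF P(2) X] two by simp
  moreover have "finite (P - {{a},{b}})" using P(2) by simp
  moreover have "{a,b} \<notin> P - {{a},{b}}" using r(2) by blast
  ultimately show "card (P - {{a},{b}} \<union> {{a,b}}) = card P - 1" by simp
qed

lemma colour_partition_swap:
  assumes P: "colour_partition G W P" "finite P"
    and cls: "{y} \<in> P" "{y1,y2} \<in> P" "y1 \<noteq> y2" and nonadj: "{y,y1} \<notin> E G"
  shows "colour_partition G W (P - {{y},{y1,y2}} \<union> {{y,y1},{y2}})"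
    and "card (P - {{y},{y1,y2}} \<union> {{y,y1},{y2}}) = card P"
proof -
  have disj: "\<And>B B'. B \<in> P \<Longrightarrow> B' \<in> P \<Longrightarrow> B \<noteq> B' \<Longrightarrow> B \<inter> B' = {}"
    using P(1) unfolding colour_partition_def by blast
  have "{y} \<noteq> {y1,y2}" using cls(3) by (auto simp: doubleton_eq_iff)
  then have "{y} \<inter> {y1,y2} = {}" by (rule disj[OF cls(1,2)])
  then have y: "y \<noteq> y1" "y \<noteq> y2" by auto
  have X: "{{y},{y1,y2}} \<subseteq> P" using cls by blast
  have U: "\<Union>{{y,y1},{y2}} = \<Union>{{y},{y1,y2}}" by auto
  have Y: "D \<noteq> {} \<and> indep D (E G)" if "D \<in> {{y,y1},{y2}}" for D
    using that nonadj unfolding indep_def by (auto simp: insert_commute)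
  have Y_disj: "D \<inter> D' = {}" if "D \<in> {{y,y1},{y2}}" "D' \<in> {{y,y1},{y2}}" "D \<noteq> D'" for D D'
    using that y cls(3) by auto
  note r = colour_partition_replace[OF P(1) X U Y Y_disj]
  show "colour_partition G W (P - {{y},{y1,y2}} \<union> {{y,y1},{y2}})" by (rule r(1))
  have two: "card {{y},{y1,y2}} = 2" "card {{y,y1},{y2}} = 2"
    using y cls(3) by (auto simp: doubleton_eq_iff)
  have "card (P - {{y},{y1,y2}}) = card P - 2" using card_Diff_subset[OF _ X] two by simp
  moreover have "card P \<ge> 2" using card_mono[OF P(2) X] two by simp
  moreover have "card (P - {{y},{y1,y2}} \<union> {{y,y1},{y2}}) = card (P - {{y},{y1,y2}}) + 2"
    using card_Un_disjoint[OF _ _ r(2)] P(2) two by simp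
  ultimately show "card (P - {{y},{y1,y2}} \<union> {{y,y1},{y2}}) = card P" by simp
qed

lemma colour_partition_card_sum:
  assumes fW: "finite W" and P: "colour_partition G W P"
  shows "card W = (\<Sum>B\<in>P. card B)"
proof -
  have "card (\<Union>P) = sum card P"
  proof (rule card_Union_disjoint)
    show "pairwise disjnt P" using P unfolding colour_partition_def pairwise_def disjnt_def by blast
    show "finite A" if "A \<in> P" for A
      using P fW that unfolding colour_partition_def by (metis Union_upper finite_subset)
  qed
  then show ?thesis using P unfolding colour_partition_def by simp
qed

lemma chi_induced_remove_indep:
  assumes g: "is_graph G" and S: "S \<subseteq> W" "S \<noteq> {}" "indep S (E G)" and W: "W \<subseteq> V G"
  shows "chi (induced G W) \<le> chi (induced G (W - S)) + 1"
proof -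
  obtain P where P: "colour_partition G (W - S) P" "card P = chi (induced G (W - S))"
    using chi_optimal_partition[OF g, of "W - S"] W by blast
  have "finite P" using colour_partition_finite[OF finite_subset_V[OF g, of "W - S"] P(1)] W by blast
  then have "card (insert S P) \<le> card P + 1" by (simp add: card_insert_if)
  then show ?thesis
    using chi_induced_le_partition[OF g W colour_partition_insert[OF P(1) S]] P(2) by simp
qed

lemma clique_induced: "is_clique (induced G W) K \<longleftrightarrow> K \<subseteq> W \<and> clique K (E G)"
  unfolding is_clique_def clique_def by auto

lemma finite_clique_sizes: "finite W \<Longrightarrow> finite {card K |K. is_clique (induced G W) K}"
  by (rule finite_subset[of _ "{..card W}"]) (auto simp: clique_induced intro: card_mono)

lemma cl_induced_ge:
  assumes "finite W" "K \<subseteq> W" "clique K (E G)"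
  shows "card K \<le> cl (induced G W)"
  unfolding cl_def using assms by (intro Max_ge[OF finite_clique_sizes]) (auto simp: clique_induced)

lemma cl_induced_attained:
  assumes fW: "finite W"
  shows "\<exists>K. K \<subseteq> W \<and> clique K (E G) \<and> card K = cl (induced G W)"
proof -
  have "{card K |K. is_clique (induced G W) K} \<noteq> {}"
    using clique_induced[of G W "{}"] unfolding clique_def by auto
  then have "cl (induced G W) \<in> {card K |K. is_clique (induced G W) K}"
    unfolding cl_def by (rule Max_in[OF finite_clique_sizes[OF fW]])
  then show ?thesis by (auto simp: clique_induced)
qed

lemma cl_induced_mono:
  assumes "finite W'" "W \<subseteq> W'"
  shows "cl (induced G W) \<le> cl (induced G W')"
  using cl_induced_attained[of W G] cl_induced_ge[of W' _ G] assms
  by (metis finite_subset order_trans)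

text \<open>A stable set meets a clique in at most one vertex, so deleting it
  lowers the clique number by at most one.\<close>

lemma cl_induced_remove_indep:
  assumes fW: "finite W" and S: "indep S (E G)"
  shows "cl (induced G W) \<le> cl (induced G (W - S)) + 1"
proof -
  obtain K where K: "K \<subseteq> W" "clique K (E G)" "card K = cl (induced G W)"
    using cl_induced_attained[OF fW] by blast
  have fK: "finite K" using K(1) fW finite_subset by blast
  have "card (K \<inter> S) \<le> 1"
    using card_le_Suc0_iff_eq[of "K \<inter> S"] fK K(2) S unfolding clique_def indep_def by auto
  moreover have "card K = card (K - S) + card (K \<inter> S)"
    using card_Int_Diff[OF fK, of S] by simp
  moreover have "card (K - S) \<le> cl (induced G (W - S))"
    using cl_induced_ge[of "W - S" "K - S" G] K fW unfolding clique_def by auto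
  ultimately show ?thesis using K(3) by linarith
qed

lemma separable_if_complete_cut:
  assumes g: "is_graph G" and T: "T \<subseteq> V G" "T \<noteq> {}" "V G - T \<noteq> {}"
    and cut: "\<And>a b. a \<in> T \<Longrightarrow> b \<in> V G - T \<Longrightarrow> {a,b} \<in> E G"
  shows "separable G"
proof -
  let ?cross = "{{a, b} |a b. a \<in> T \<and> b \<in> V G - T}"
  have edges: "E G = {e \<in> E G. e \<subseteq> T} \<union> {e \<in> E G. e \<subseteq> V G - T} \<union> ?cross"
  proof
    show "E G \<subseteq> {e \<in> E G. e \<subseteq> T} \<union> {e \<in> E G. e \<subseteq> V G - T} \<union> ?cross"
    proof
      fix e assume e: "e \<in> E G"
      then obtain p q where pq: "e = {p,q}" "p \<in> V G" "q \<in> V G" using g unfolding is_graph_def by blast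
      show "e \<in> {e \<in> E G. e \<subseteq> T} \<union> {e \<in> E G. e \<subseteq> V G - T} \<union> ?cross"
      proof (cases "p \<in> T"; cases "q \<in> T")
        assume "p \<in> T" "q \<notin> T" then show ?thesis using pq by blast
      next
        assume "p \<notin> T" "q \<in> T"
        moreover have "e = {q,p}" using pq by (simp add: insert_commute)
        ultimately show ?thesis using pq by blast
      qed (use e pq in blast)+
    qed
    show "{e \<in> E G. e \<subseteq> T} \<union> {e \<in> E G. e \<subseteq> V G - T} \<union> ?cross \<subseteq> E G"
      using cut by blast
  qed
  have "join (induced G T) (induced G (V G - T)) = (T \<union> (V G - T), E G)"
    unfolding join_def using edges by simp
  also have "\<dots> = G" using T(1) by (simp add: Un_absorb1 V_def E_def)
  finally have "G = join (induced G T) (induced G (V G - T))" ..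
  moreover have "is_graph (induced G T)" "is_graph (induced G (V G - T))"
    using is_graph_induced[OF g] T(1) by auto
  moreover have "V (induced G T) \<inter> V (induced G (V G - T)) = {}"
    "V (induced G T) \<noteq> {}" "V (induced G (V G - T)) \<noteq> {}"
    using T by auto
  ultimately show ?thesis unfolding separable_def by blast
qed

lemma card_less_ramsey3:
  assumes g: "is_graph G"
    and no_clique: "\<And>K. is_clique G K \<Longrightarrow> card K \<noteq> p"
    and no_triple: "\<And>I. is_indep G I \<Longrightarrow> card I \<noteq> 3"
  shows "card (V G) < ramsey3 (int p)"
proof (rule ccontr)
  let ?Ramsey = "\<lambda>n. \<forall>G. is_graph G \<and> card (V G) \<ge> n \<longrightarrow>
      (\<exists>K. is_clique G K \<and> int (card K) = int p) \<or> (\<exists>I. is_indep G I \<and> card I = 3)"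
  obtain r where r: "\<forall>(V'::nat set) E'. finite V' \<and> card V' \<ge> r \<longrightarrow>
      (\<exists>R \<subseteq> V'. card R = p \<and> clique R E' \<or> card R = 3 \<and> indep R E')"
    using ramsey2[of p 3] by blast
  have "?Ramsey r"
  proof (intro allI impI)
    fix G' assume G': "is_graph G' \<and> r \<le> card (V G')"
    then have "finite (V G')" unfolding is_graph_def by blast
    then obtain R where R: "R \<subseteq> V G'" "card R = p \<and> clique R (E G') \<or> card R = 3 \<and> indep R (E G')"
      using r G' by blast
    then have "is_clique G' R \<and> card R = p \<or> is_indep G' R \<and> card R = 3"
      using is_clique_iff[of G' R] is_indep_iff[of G' R] G' by blast
    then show "(\<exists>K. is_clique G' K \<and> int (card K) = int p) \<or> (\<exists>I. is_indep G' I \<and> card I = 3)"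
      by auto
  qed
  then have "?Ramsey (ramsey3 (int p))" unfolding ramsey3_def by (rule LeastI)
  then have "is_graph G \<and> ramsey3 (int p) \<le> card (V G) \<longrightarrow>
      (\<exists>K. is_clique G K \<and> int (card K) = int p) \<or> (\<exists>I. is_indep G I \<and> card I = 3)"
    by (rule spec)
  moreover assume "\<not> card (V G) < ramsey3 (int p)"
  ultimately have "(\<exists>K. is_clique G K \<and> int (card K) = int p) \<or> (\<exists>I. is_indep G I \<and> card I = 3)"
    using g by (simp add: not_less)
  then show False using no_clique no_triple by auto
qed

lemma minimal_in_no_proper_induced:
  assumes min: "minimal_in \<M> G0" and g: "is_graph G0" and W: "W \<subset> V G0"
  shows "induced G0 W \<notin> \<M>"
proof
  assume "induced G0 W \<in> \<M>"
  then have "(LEAST n. \<exists>G\<in>\<M>. card (V G) = n) \<le> card W"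
    by (intro Least_le bexI[of _ "induced G0 W"]) auto
  moreover have "card W < card (V G0)" using psubset_card_mono[OF _ W] g unfolding is_graph_def by blast
  ultimately show False using min unfolding minimal_in_def by simp
qed

lemma card_less_after_exchange:
  assumes A: "finite A" and X: "X \<subseteq> A" "card X = 2" and B: "B \<subseteq> insert d (A - X)"
  shows "card B < card A"
proof -
  have "card B \<le> card (insert d (A - X))" using card_mono[OF _ B] A by simp
  also have "\<dots> \<le> card (A - X) + 1" using A by (simp add: card_insert_if)
  also have "\<dots> < card A"
    using card_Diff_subset[OF finite_subset[OF X(1) A] X(1)] card_mono[OF A X(1)] X(2) by simp
  finally show ?thesis .
qed

section \<open>Minimal nonseparable members of \<open>M(x,y)\<close>\<close>

locale minimal_nonseparable =
  fixes G :: graph and x y :: int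
  assumes x_nonneg: "x \<ge> 0" and graph: "is_graph G" and in_M: "G \<in> M x y"
    and no_proper_induced: "\<And>W. W \<subset> V G \<Longrightarrow> induced G W \<notin> M x y"
    and nonseparable: "\<not> separable G"
begin

abbreviation "nG \<equiv> card (V G)"
abbreviation "chiG \<equiv> chi G"
abbreviation "clG \<equiv> cl G"

lemma finite_V: "finite (V G)"
  using graph unfolding is_graph_def by simp

lemma order_bound: "int nG < int chiG + 2 * (int chiG - int clG) - x"
  and excess_le: "int chiG - int clG \<le> y"
  using in_M unfolding M_def f_def by auto

lemma chi_le_order: "chiG \<le> nG"
  using chi_induced_le_card[OF graph, of "V G"] induced_all[OF graph] by simp

lemma chi_sub_le: "W \<subseteq> V G \<Longrightarrow> chi (induced G W) \<le> chiG"
  using chi_induced_mono[OF graph, of W "V G"] induced_all[OF graph] by simp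

lemma cl_sub_le: "W \<subseteq> V G \<Longrightarrow> cl (induced G W) \<le> clG"
  using cl_induced_mono[OF finite_V, of W G] induced_all[OF graph] by simp

lemma cl_lt_chi: "clG < chiG"
proof -
  have "int chiG \<le> int nG" using chi_le_order by simp
  then have "int clG < int chiG" using order_bound x_nonneg by arith
  then show ?thesis by simp
qed

lemma proper_induced_order:
  assumes W: "W \<subset> V G"
    and excess: "int (chi (induced G W)) - int (cl (induced G W)) \<le> int chiG - int clG"
  shows "int (chi (induced G W)) + 2 * (int (chi (induced G W)) - int (cl (induced G W))) - x
           \<le> int (card W)"
proof -
  have "induced G W \<notin> M x y" using no_proper_induced[OF W] .
  moreover have "is_graph (induced G W)" using is_graph_induced[OF graph] W by blast
  ultimately show ?thesis using excess excess_le unfolding M_def f_def by auto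
qed

definition optimal :: "nat set set \<Rightarrow> bool" where
  "optimal P \<longleftrightarrow> colour_partition G (V G) P \<and> card P = chiG"

lemma optimal_exists: "\<exists>P. optimal P"
  using chi_optimal_partition[OF graph, of "V G"] induced_all[OF graph] unfolding optimal_def by simp

lemma optimal_finite: "optimal P \<Longrightarrow> finite P"
  unfolding optimal_def using colour_partition_finite[OF finite_V] by blast

lemma chi_le_partition: "colour_partition G (V G) P \<Longrightarrow> chiG \<le> card P"
  using chi_induced_le_partition[OF graph, of "V G" P] induced_all[OF graph] by simp

lemma optimal_covers: "optimal P \<Longrightarrow> v \<in> V G \<Longrightarrow> \<exists>B\<in>P. v \<in> B"
  unfolding optimal_def colour_partition_def by blast

lemma chi_remove_class:
  assumes P: "optimal P" and B: "B \<in> P"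
  shows "int (chi (induced G (V G - B))) \<le> int chiG - 1"
proof -
  have "colour_partition G (V G - B) (P - {B})"
    using colour_partition_remove[OF _ B] P unfolding optimal_def by blast
  then have "chi (induced G (V G - B)) \<le> card (P - {B})"
    using chi_induced_le_partition[OF graph] by blast
  moreover have "card P > 0" using B optimal_finite[OF P] card_gt_0_iff by blast
  ultimately show ?thesis using P B optimal_finite[OF P] unfolding optimal_def by (simp add: of_nat_diff)
qed

subsection \<open>Stable sets have at most two vertices\<close>

text \<open>If deleting \<open>v\<close> does not lower \<open>chi\<close>, it lowers \<open>cl\<close>: otherwise \<open>G - v\<close>
  would be a smaller member of \<open>M(x,y)\<close>.\<close>

lemma cl_drops_if_chi_stays:
  assumes v: "v \<in> V G" and chi: "chiG \<le> chi (induced G (V G - {v}))"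
  shows "cl (induced G (V G - {v})) < clG"
proof (rule ccontr)
  let ?W = "V G - {v}"
  assume "\<not> cl (induced G ?W) < clG"
  then have "cl (induced G ?W) = clG" using cl_sub_le[of ?W] by simp
  moreover have "chi (induced G ?W) = chiG" using chi chi_sub_le[of ?W] by simp
  moreover have "?W \<subset> V G" using v by blast
  ultimately have "int chiG + 2 * (int chiG - int clG) - x \<le> int (card ?W)"
    using proper_induced_order[of ?W] by simp
  moreover have "nG > 0" using v finite_V card_gt_0_iff by blast
  then have "int (card ?W) = int nG - 1" using v finite_V by (simp add: of_nat_diff)
  ultimately show False using order_bound by linarith
qed

lemma max_clique_contains:
  assumes v: "v \<in> V G" and chi: "chiG \<le> chi (induced G (V G - {v}))"
    and K: "K \<subseteq> V G" "clique K (E G)" "card K = clG"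
  shows "v \<in> K"
proof (rule ccontr)
  assume "v \<notin> K"
  then have "card K \<le> cl (induced G (V G - {v}))"
    using cl_induced_ge[of "V G - {v}" K G] finite_V K by blast
  then show False using cl_drops_if_chi_stays[OF v chi] K(3) by simp
qed

lemma indep_le_2:
  assumes I: "I \<subseteq> V G" "indep I (E G)"
  shows "card I \<le> 2"
proof (rule ccontr)
  assume "\<not> card I \<le> 2"
  then obtain S where S: "S \<subseteq> I" "card S = 3" "finite S"
    using obtain_subset_with_card_n[of 3 I] by force
  have SV: "S \<subseteq> V G" and indS: "indep S (E G)" and S_ne: "S \<noteq> {}"
    using I S unfolding indep_def by auto
  let ?W = "V G - S"
  have W: "?W \<subset> V G" using SV S_ne by blast
  have card_W: "int (card ?W) = int nG - 3"
    using card_Diff_subset[OF S(3) SV] card_mono[OF finite_V SV] S(2) by (simp add: of_nat_diff)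
  have chi_W: "chiG \<le> chi (induced G ?W) + 1"
    using chi_induced_remove_indep[OF graph SV S_ne indS] induced_all[OF graph] by simp
  have cl_W: "int clG \<le> int (cl (induced G ?W)) + 1" "int (cl (induced G ?W)) \<le> int clG"
    using cl_induced_remove_indep[OF finite_V indS] induced_all[OF graph] cl_sub_le[of ?W] by auto
  show False
  proof (cases "chi (induced G ?W) < chiG")
    case True
    then have chi_W': "int (chi (induced G ?W)) = int chiG - 1" using chi_W by linarith
    then have "int (chi (induced G ?W)) - int (cl (induced G ?W)) \<le> int chiG - int clG"
      using cl_W by linarith
    from proper_induced_order[OF W this] show False
      using chi_W' card_W cl_W order_bound by arith
  next
    case False
    have stays: "chiG \<le> chi (induced G (V G - {v}))" if "v \<in> S" for v
    proof -
      have "chi (induced G ?W) \<le> chi (induced G (V G - {v}))"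
        by (rule chi_induced_mono[OF graph]) (use that in auto)
      then show ?thesis using False by simp
    qed
    obtain K where K: "K \<subseteq> V G" "clique K (E G)" "card K = clG"
      using cl_induced_attained[OF finite_V, of G] induced_all[OF graph] by auto
    obtain a b c where "S = {a, b, c}" "a \<noteq> b" using S(2) unfolding card_3_iff by blast
    then have ab: "a \<in> S" "b \<in> S" "a \<noteq> b" by auto
    have "a \<in> K" "b \<in> K" using max_clique_contains[OF _ stays K] ab SV by auto
    then show False using K(2) indS ab unfolding clique_def indep_def by blast
  qed
qed

lemma class_le_2:
  assumes P: "colour_partition G W P" "W \<subseteq> V G" and B: "B \<in> P"
  shows "B \<subseteq> V G" "finite B" "card B \<le> 2"
proof -
  show BV: "B \<subseteq> V G" using P B unfolding colour_partition_def by blast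
  then show "finite B" using finite_V finite_subset by blast
  show "card B \<le> 2" using indep_le_2[OF BV] P B unfolding colour_partition_def by blast
qed

lemma class_two_elements:
  assumes P: "colour_partition G W P" "W \<subseteq> V G" and B: "B \<in> P" "a \<in> B" "B \<noteq> {a}"
  shows "\<exists>z. z \<noteq> a \<and> B = {a, z}"
proof -
  obtain z where z: "z \<in> B" "z \<noteq> a" using B by blast
  have "{a, z} = B"
    by (rule card_seteq) (use z B class_le_2[OF P B(1)] in auto)
  then show ?thesis using z by blast
qed

lemma class_card_1_or_2:
  assumes P: "colour_partition G W P" "W \<subseteq> V G" and B: "B \<in> P"
  shows "card B = 1 \<or> card B = 2"
proof -
  have "B \<noteq> {}" using P B unfolding colour_partition_def by blast
  then have "card B \<noteq> 0" using class_le_2[OF P B] by simp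
  then show ?thesis using class_le_2[OF P B] by linarith
qed

text \<open>Two singleton classes of an optimal partition are adjacent, since
  otherwise they could be merged.\<close>

lemma optimal_singletons_adjacent:
  assumes P: "optimal P" and ab: "{a} \<in> P" "{b} \<in> P" "a \<noteq> b"
  shows "{a, b} \<in> E G"
proof (rule ccontr)
  assume "{a, b} \<notin> E G"
  note merged = colour_partition_merge[OF _ optimal_finite[OF P] ab this]
  have "card P > 0" using optimal_finite[OF P] ab by (auto simp: card_gt_0_iff)
  then show False
    using chi_le_partition[OF merged(1)] merged(2) P unfolding optimal_def by auto
qed

lemma vertex_critical:
  assumes v: "v \<in> V G"
  shows "chi (induced G (V G - {v})) < chiG"
proof (rule ccontr)
  assume "\<not> chi (induced G (V G - {v})) < chiG"
  then have chi_v: "chiG \<le> chi (induced G (V G - {v}))" by simp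
  have cl_v: "cl (induced G (V G - {v})) < clG" using cl_drops_if_chi_stays[OF v chi_v] .
  obtain P where P: "optimal P" using optimal_exists by blast
  have part: "colour_partition G (V G) P" using P unfolding optimal_def by blast
  obtain B where B: "B \<in> P" "v \<in> B" using optimal_covers[OF P v] by blast
  show False
  proof (cases "B = {v}")
    case True
    then show False using chi_remove_class[OF P B(1)] chi_v by simp
  next
    case False
    then obtain u where u: "u \<noteq> v" "B = {v, u}" using class_two_elements[OF part _ B] by blast
    let ?W = "V G - B"
    have BV: "B \<subseteq> V G" and indB: "indep B (E G)"
      using part B(1) unfolding colour_partition_def by auto
    have "chi (induced G (V G - {v})) \<le> chi (induced G (V G - {v} - {u})) + 1"
      by (rule chi_induced_remove_indep[OF graph]) (use u BV in \<open>auto simp: indep_def\<close>)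
    moreover have "V G - {v} - {u} = ?W" using u by blast
    ultimately have chi_W: "int (chi (induced G ?W)) = int chiG - 1"
      using chi_v chi_remove_class[OF P B(1)] by simp
    have "cl (induced G ?W) \<le> cl (induced G (V G - {v}))"
      using cl_induced_mono[of "V G - {v}" ?W G] finite_V B by blast
    moreover have "clG \<le> cl (induced G ?W) + 1"
      using cl_induced_remove_indep[OF finite_V indB] induced_all[OF graph] by simp
    ultimately have cl_W: "int (cl (induced G ?W)) = int clG - 1" using cl_v by simp
    have W: "?W \<subset> V G" using B BV by blast
    have "int (card ?W) = int nG - 2"
      using card_Diff_subset[OF _ BV] card_mono[OF finite_V BV] class_le_2[OF part _ B(1)] u
      by (simp add: of_nat_diff)
    moreover have "int (chi (induced G ?W)) - int (cl (induced G ?W)) \<le> int chiG - int clG"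
      using chi_W cl_W by linarith
    note proper_induced_order[OF W this]
    ultimately show False using chi_W cl_W order_bound by arith
  qed
qed

text \<open>Deleting a colour class of size two shows \<open>|V(G)| \<ge> chi + 2f - x - 1\<close>;
  such a class exists because otherwise \<open>G\<close> would be complete.\<close>

lemma order_lower_bound: "int chiG + 2 * (int chiG - int clG) - x - 1 \<le> int nG"
proof -
  obtain P where P: "optimal P" using optimal_exists by blast
  have part: "colour_partition G (V G) P" using P unfolding optimal_def by blast
  have "\<exists>B\<in>P. card B = 2"
  proof (rule ccontr)
    assume "\<not> (\<exists>B\<in>P. card B = 2)"
    then have "card B = 1" if "B \<in> P" for B using class_card_1_or_2[OF part _ that] that by auto
    then have singleton: "{v} \<in> P" if "v \<in> V G" for v
      using optimal_covers[OF P that] by (metis card_1_singletonE singletonD)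
    have "clique (V G) (E G)"
      unfolding clique_def using optimal_singletons_adjacent[OF P] singleton by blast
    then have "nG \<le> clG"
      using cl_induced_ge[OF finite_V, of "V G" G] induced_all[OF graph] by simp
    then show False using chi_le_order cl_lt_chi by linarith
  qed
  then obtain B where B: "B \<in> P" "card B = 2" by blast
  let ?W = "V G - B"
  have BV: "B \<subseteq> V G" and indB: "indep B (E G)" and B_ne: "B \<noteq> {}"
    using part B unfolding colour_partition_def by auto
  have "chiG \<le> chi (induced G ?W) + 1"
    using chi_induced_remove_indep[OF graph BV B_ne indB] induced_all[OF graph] by simp
  then have chi_W: "int (chi (induced G ?W)) = int chiG - 1" using chi_remove_class[OF P B(1)] by simp
  have cl_W: "int clG \<le> int (cl (induced G ?W)) + 1" "int (cl (induced G ?W)) \<le> int clG"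
    using cl_induced_remove_indep[OF finite_V indB] induced_all[OF graph] cl_sub_le[of ?W] by auto
  have W: "?W \<subset> V G" using BV B_ne by blast
  have "int (card ?W) = int nG - 2"
    using card_Diff_subset[OF _ BV] card_mono[OF finite_V BV] B(2) finite_subset[OF BV finite_V]
    by (simp add: of_nat_diff)
  moreover have "int (chi (induced G ?W)) - int (cl (induced G ?W)) \<le> int chiG - int clG"
    using chi_W cl_W by linarith
  note proper_induced_order[OF W this]
  ultimately show ?thesis using chi_W cl_W by arith
qed

subsection \<open>Singleton classes of optimal partitions\<close>

definition singletons :: "nat set set \<Rightarrow> nat set" where
  "singletons P = {v. {v} \<in> P}"

lemma singletons_subset: "optimal P \<Longrightarrow> singletons P \<subseteq> V G"
  unfolding optimal_def singletons_def colour_partition_def by blast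

lemma finite_singletons: "optimal P \<Longrightarrow> finite (singletons P)"
  using singletons_subset finite_V finite_subset by blast

text \<open>Since all classes have one or two vertices, every optimal partition has
  the same number of singleton classes, namely \<open>2 chi - |V(G)|\<close>.\<close>

lemma singletons_count:
  assumes N: "optimal N"
  shows "card (singletons N) + nG = 2 * chiG"
proof -
  have part: "colour_partition G (V G) N" and card_N: "card N = chiG"
    using N unfolding optimal_def by auto
  have fin: "finite N" using optimal_finite[OF N] .
  have "(\<Sum>B\<in>N. card B + (if card B = 1 then 1 else 0)) = (\<Sum>B\<in>N. (2::nat))"
    by (rule sum.cong) (use class_card_1_or_2[OF part] in auto)
  then have "(\<Sum>B\<in>N. card B) + card {B\<in>N. card B = 1} = 2 * card N"
    using fin by (simp add: sum.distrib sum.If_cases Int_def)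
  moreover have "{B\<in>N. card B = 1} = (\<lambda>v. {v}) ` singletons N"
  proof (intro equalityI subsetI)
    fix B assume "B \<in> {B\<in>N. card B = 1}"
    then have "B \<in> N" "card B = 1" by auto
    moreover obtain v where "B = {v}" using \<open>card B = 1\<close> by (rule card_1_singletonE)
    ultimately show "B \<in> (\<lambda>v. {v}) ` singletons N" unfolding singletons_def by blast
  qed (auto simp: singletons_def)
  moreover have "card ((\<lambda>v. {v}) ` singletons N) = card (singletons N)"
    by (rule card_image) (simp add: inj_on_def)
  moreover have "nG = (\<Sum>B\<in>N. card B)" using colour_partition_card_sum[OF finite_V part] .
  ultimately show ?thesis using card_N by simp
qed

text \<open>Every vertex is a singleton class of some optimal partition: colour
  \<open>G - v\<close> optimally and add the class \<open>{v}\<close>.\<close>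

lemma optimal_with_singleton:
  assumes v: "v \<in> V G"
  shows "\<exists>N. optimal N \<and> {v} \<in> N"
proof -
  obtain P where P: "colour_partition G (V G - {v}) P" "card P = chi (induced G (V G - {v}))"
    using chi_optimal_partition[OF graph, of "V G - {v}"] by blast
  have part: "colour_partition G (V G) (insert {v} P)"
    using colour_partition_insert[OF P(1)] v unfolding indep_def by simp
  have "finite P" using colour_partition_finite[OF _ P(1)] finite_V by simp
  then have "card (insert {v} P) \<le> chiG"
    using vertex_critical[OF v] P(2) card_insert_le_m1 by (simp add: card_insert_if)
  then show ?thesis using chi_le_partition[OF part] part unfolding optimal_def by auto
qed

lemma class_partner:
  assumes P: "optimal P" and v: "v \<in> V G" "{v} \<notin> P"
  shows "\<exists>w. w \<noteq> v \<and> {v, w} \<in> P \<and> {v, w} \<notin> E G"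
proof -
  have part: "colour_partition G (V G) P" using P unfolding optimal_def by blast
  obtain B where B: "B \<in> P" "v \<in> B" using optimal_covers[OF P v(1)] by blast
  then obtain w where w: "w \<noteq> v" "B = {v, w}" using class_two_elements[OF part _ B] v(2) by blast
  moreover have "{v, w} \<notin> E G" using part B w unfolding colour_partition_def indep_def by auto
  ultimately show ?thesis using B(1) by blast
qed

text \<open>One exchange step: if \<open>u\<close> is a singleton of \<open>N\<close> but not of \<open>P\<close>, let
  \<open>{u,u1}\<close> be its \<open>P\<close>-class and \<open>{u1,u2}\<close> the \<open>N\<close>-class of \<open>u1\<close>;
  recolouring \<open>{u,u1}, {u2}\<close> brings \<open>N\<close> closer to \<open>P\<close> and keeps \<open>{t}\<close>.\<close>

lemma exchange_step:
  assumes P: "optimal P" and N: "optimal N" "{t} \<in> N"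
    and u: "{u} \<in> N" "{u} \<notin> P" "u \<noteq> t"
  shows "\<exists>N'. optimal N' \<and> {t} \<in> N' \<and> card (N' - P) < card (N - P)"
proof -
  have partP: "colour_partition G (V G) P" and partN: "colour_partition G (V G) N"
    using P N unfolding optimal_def by auto
  have disjP: "\<And>B B'. B \<in> P \<Longrightarrow> B' \<in> P \<Longrightarrow> B \<noteq> B' \<Longrightarrow> B \<inter> B' = {}"
    and disjN: "\<And>B B'. B \<in> N \<Longrightarrow> B' \<in> N \<Longrightarrow> B \<noteq> B' \<Longrightarrow> B \<inter> B' = {}"
    using partP partN unfolding colour_partition_def by auto
  have uV: "u \<in> V G" using partN u(1) unfolding colour_partition_def by blast
  obtain u1 where u1: "u1 \<noteq> u" "{u, u1} \<in> P" "{u, u1} \<notin> E G"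
    using class_partner[OF P uV u(2)] by blast
  have u1V: "u1 \<in> V G" using partP u1(2) unfolding colour_partition_def by blast
  have "{u1} \<notin> N" using optimal_singletons_adjacent[OF N(1) u(1)] u1(1,3) by blast
  then obtain u2 where u2: "u2 \<noteq> u1" "{u1, u2} \<in> N"
    using class_partner[OF N(1) u1V] by blast
  let ?C = "{u1, u2}"
  have "{u} \<noteq> ?C" "{t} \<noteq> ?C" using u2(1) by (auto simp: doubleton_eq_iff)
  then have u_notin_C: "u \<notin> ?C" using disjN[OF u(1) u2(2)] by blast
  define N' where "N' = N - {{u}, ?C} \<union> {{u, u1}, {u2}}"
  have "colour_partition G (V G) N'" "card N' = card N"
    unfolding N'_def using colour_partition_swap[OF partN optimal_finite[OF N(1)] u(1) u2(2)] u2(1) u1(3)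
    by auto
  then have opt: "optimal N'" using N unfolding optimal_def by simp
  have t: "{t} \<in> N'" unfolding N'_def using N(2) u(3) \<open>{t} \<noteq> ?C\<close> by auto
  have "?C \<notin> P" using disjP[OF _ u1(2)] u_notin_C by blast
  then have X: "{{u}, ?C} \<subseteq> N - P" using u u2(2) by blast
  have "card {{u}, ?C} = 2" using \<open>{u} \<noteq> ?C\<close> by simp
  moreover have "N' - P \<subseteq> insert {u2} ((N - P) - {{u}, ?C})" unfolding N'_def using u1(2) by auto
  ultimately have "card (N' - P) < card (N - P)"
    using card_less_after_exchange[OF _ X] optimal_finite[OF N(1)] by simp
  then show ?thesis using opt t by blast
qed

lemma exchange:
  assumes P: "optimal P" and N0: "optimal N0" "{t} \<in> N0"
  shows "\<exists>N. optimal N \<and> {t} \<in> N \<and> singletons N \<subseteq> insert t (singletons P)"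
proof -
  obtain N where N: "optimal N" "{t} \<in> N"
    and least: "\<And>N'. optimal N' \<and> {t} \<in> N' \<Longrightarrow> card (N - P) \<le> card (N' - P)"
    using ex_has_least_nat[of "\<lambda>N. optimal N \<and> {t} \<in> N" N0 "\<lambda>N. card (N - P)"] N0 by blast
  have "singletons N \<subseteq> insert t (singletons P)"
  proof
    fix u assume "u \<in> singletons N"
    show "u \<in> insert t (singletons P)"
    proof (rule ccontr)
      assume "u \<notin> insert t (singletons P)"
      then obtain N' where "optimal N'" "{t} \<in> N'" "card (N' - P) < card (N - P)"
        using exchange_step[OF P N] \<open>u \<in> singletons N\<close> unfolding singletons_def by auto
      then show False using least by fastforce
    qed
  qed
  then show ?thesis using N by blast
qed

lemma singleton_partner_propagates:
  assumes N: "optimal N" "t \<in> singletons N" "w \<in> singletons N" "t \<noteq> w"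
    and t': "t' \<in> V G" "t' \<noteq> t" "{t, t'} \<notin> E G"
  shows "\<exists>N2. optimal N2 \<and> t' \<in> singletons N2 \<and> w \<in> singletons N2 \<and> t' \<noteq> w"
proof -
  have not_single: "t' \<notin> singletons N"
    using optimal_singletons_adjacent[OF N(1)] N(2) t' unfolding singletons_def by blast
  obtain N' where N': "optimal N'" "{t'} \<in> N'" using optimal_with_singleton[OF t'(1)] by blast
  obtain N2 where N2: "optimal N2" "{t'} \<in> N2" "singletons N2 \<subseteq> insert t' (singletons N)"
    using exchange[OF N(1) N'] by blast
  have same: "card (singletons N2) = card (singletons N)"
    using singletons_count[OF N(1)] singletons_count[OF N2(1)] by simp
  have "t \<notin> singletons N2"
    using optimal_singletons_adjacent[OF N2(1)] N2(2) t' unfolding singletons_def by blast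
  moreover have "t \<in> singletons N2 \<or> w \<in> singletons N2"
  proof (rule ccontr)
    assume "\<not> (t \<in> singletons N2 \<or> w \<in> singletons N2)"
    then have "singletons N2 \<subseteq> insert t' (singletons N - {t, w})" using N2(3) by blast
    moreover have "{t, w} \<subseteq> singletons N" "card {t, w} = 2" using N(2-4) by auto
    ultimately have "card (singletons N2) < card (singletons N)"
      using card_less_after_exchange[OF finite_singletons[OF N(1)]] by blast
    then show False using same by simp
  qed
  ultimately have "w \<in> singletons N2" by blast
  moreover have "t' \<noteq> w" using not_single N(3) by blast
  moreover have "t' \<in> singletons N2" using N2(2) unfolding singletons_def by simp
  ultimately show ?thesis using N2(1) by blast
qed

text \<open>If an optimal partition had two singleton classes \<open>{u}, {w}\<close>, the set \<open>T\<close>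
  of vertices that can be a singleton together with \<open>w\<close> would be completely
  joined to the rest of the graph, contradicting nonseparability.\<close>

lemma at_most_one_singleton:
  assumes P: "optimal P"
  shows "card (singletons P) \<le> 1"
proof (rule ccontr)
  assume "\<not> card (singletons P) \<le> 1"
  then obtain u w where uw: "u \<in> singletons P" "w \<in> singletons P" "u \<noteq> w"
    using card_le_Suc0_iff_eq[OF finite_singletons[OF P]] by auto
  define T where "T = {t \<in> V G. t \<noteq> w \<and> (\<exists>N. optimal N \<and> t \<in> singletons N \<and> w \<in> singletons N)}"
  have wV: "w \<in> V G" using uw singletons_subset[OF P] by blast
  have cut: "{a, b} \<in> E G" if "a \<in> T" "b \<in> V G - T" for a b
  proof (rule ccontr)
    assume "{a, b} \<notin> E G"
    moreover obtain N where "optimal N" "a \<in> singletons N" "w \<in> singletons N" "a \<noteq> w"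
      using \<open>a \<in> T\<close> unfolding T_def by blast
    moreover have "b \<in> V G" "b \<noteq> a" using that by auto
    ultimately obtain N2 where "optimal N2" "b \<in> singletons N2" "w \<in> singletons N2" "b \<noteq> w"
      using singleton_partner_propagates[of N a w b] by blast
    then have "b \<in> T" using \<open>b \<in> V G\<close> unfolding T_def by blast
    then show False using that by blast
  qed
  have "u \<in> T" unfolding T_def using uw P singletons_subset[OF P] by blast
  moreover have "w \<in> V G - T" unfolding T_def using wV by blast
  moreover have "T \<subseteq> V G" unfolding T_def by blast
  ultimately show False using separable_if_complete_cut[OF graph _ _ _ cut] nonseparable by blast
qed

lemma order_eq: "int nG = 2 * int chiG - 1"
proof -
  have "clG < nG" using less_le_trans[OF cl_lt_chi chi_le_order] .
  then have "V G \<noteq> {}" by auto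
  then obtain v where v: "v \<in> V G" by blast
  obtain N where N: "optimal N" "{v} \<in> N" using optimal_with_singleton[OF v] by blast
  have "v \<in> singletons N" using N(2) unfolding singletons_def by simp
  then have "card (singletons N) > 0" using finite_singletons[OF N(1)] card_gt_0_iff by blast
  then show ?thesis using singletons_count[OF N(1)] at_most_one_singleton[OF N(1)] by simp
qed

lemma no_larger_clique:
  assumes "is_clique G K"
  shows "card K \<noteq> clG + 1"
proof -
  have "card K \<le> cl (induced G (V G))"
    using cl_induced_ge[OF finite_V] assms unfolding is_clique_iff by blast
  then show ?thesis using induced_all[OF graph] by simp
qed

lemma no_stable_triple:
  assumes "is_indep G I"
  shows "card I \<noteq> 3"
proof -
  have "I \<subseteq> V G" "indep I (E G)" using assms is_indep_iff[OF graph] by auto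
  then have "card I \<le> 2" by (rule indep_le_2)
  then show ?thesis by simp
qed

text \<open>Comparing \<open>|V(G)| = chi + 2f - x - 1\<close> with \<open>|V(G)| = 2 chi - 1\<close> gives
  \<open>chi = 2f - x\<close> and \<open>cl = f - x\<close>.\<close>

lemma order_and_ramsey_bound:
  "int nG = 4 * f G - 2 * x - 1 \<and> 4 * f G - 2 * x - 1 < int (ramsey3 (f G - x + 1))"
proof -
  have f: "f G = int chiG - int clG" unfolding f_def ..
  have "int nG = int chiG + 2 * f G - x - 1" using order_lower_bound order_bound f by arith
  then have order: "int nG = 4 * f G - 2 * x - 1" and cl: "f G - x + 1 = int (clG + 1)"
    using order_eq f by arith+
  have "nG < ramsey3 (f G - x + 1)"
    unfolding cl using card_less_ramsey3[OF graph no_larger_clique no_stable_triple] .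
  then show ?thesis using order by simp
qed

end

theorem theorem3p1:
  fixes x y :: int and G0 :: graph
  assumes "x \<ge> 0"
    and "M x y \<noteq> {}"
    and "minimal_in (M x y) G0"
    and "\<not> separable G0"
  shows "int (card (V G0)) = 4 * f G0 - 2 * x - 1 \<and>
         4 * f G0 - 2 * x - 1 < int (ramsey3 (f G0 - x + 1))"
proof -
  have "G0 \<in> M x y" using assms(3) unfolding minimal_in_def by blast
  moreover have "is_graph G0" using calculation unfolding M_def by blast
  ultimately interpret minimal_nonseparable G0 x y
    using assms(1,4) minimal_in_no_proper_induced[OF assms(3)] by unfold_locales
  show ?thesis by (rule order_and_ramsey_bound)
qed

end
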